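(* Let $G$ be a finite group, let $n\ge 1$ and let $m$ be odd. Suppose $G$ is $R_{2^n m}$ and $G$ has exactly $m(2^n-1)$ conjugacy classes containing involutions. Then for every central involution $z$ of $G$ and every involution $x\neq z$ of $G$, the element $xz$ is an involution that is not conjugate to $x$ in $G$.
   Context: For a finite group $G$, $\overline{G}=G\cup\{\infty\}$, and $K_V$ denotes the complete graph on vertex set $V$. $G$ acts on $\overline{G}$ by right multiplication, with $\infty g=\infty$ for all $g\in G$; for a subgraph $F$ of $K_{\overline{G}}$ and $g\in G$, $Fg$ is the graph obtained by replacing every vertex $v$ by $vg$. A $k$-factor of $K_V$ is a spanning $k$-regular subgraph, and a $k$-factorization is a set of $k$-factors whose edge sets partition the edge set of $K_V$. A $k$-factorization $\mathcal{F}$ of $K_{\overline{G}}$ is $1$-rotational if $Fg\in\mathcal{F}$ for all $F\in\mathcal{F}$ and $g\in G$. A finite group $G$ is called $R_k$ if there exists a $1$-rotational $k$-factorization of $K_{\overline{G}}$. An involution is an element of order $2$; a central involution is an involution in the center of $G$. *)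

theory Defs
  imports "HOL-Algebra.Algebra"
begin

(* The vertex set  G-bar = G \<union> {\<infinity>}:  Some g  stands for g \<in> G,  None  stands for \<infinity>. *)
definition gbar :: "('a, 'b) monoid_scheme \<Rightarrow> 'a option set" where
  "gbar G = Some ` carrier G \<union> {None}"

definition complete_edges :: "'v set \<Rightarrow> 'v set set" where
  "complete_edges V = {e. e \<subseteq> V \<and> card e = 2}"

definition degree_in :: "'v set set \<Rightarrow> 'v \<Rightarrow> nat" where
  "degree_in F v = card {e \<in> F. v \<in> e}"

definition is_k_factor :: "'v set \<Rightarrow> nat \<Rightarrow> 'v set set \<Rightarrow> bool" where
  "is_k_factor V k F \<longleftrightarrow> F \<subseteq> complete_edges V \<and> (\<forall>v\<in>V. degree_in F v = k)"

definition is_k_factorization :: "'v set \<Rightarrow> nat \<Rightarrow> 'v set set set \<Rightarrow> bool" where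
  "is_k_factorization V k \<F> \<longleftrightarrow>
     (\<forall>F\<in>\<F>. is_k_factor V k F) \<and>
     (\<forall>F1\<in>\<F>. \<forall>F2\<in>\<F>. F1 \<noteq> F2 \<longrightarrow> F1 \<inter> F2 = {}) \<and>
     \<Union>\<F> = complete_edges V"

definition rmult :: "('a, 'b) monoid_scheme \<Rightarrow> 'a \<Rightarrow> 'a option \<Rightarrow> 'a option" where
  "rmult G g v = (case v of None \<Rightarrow> None | Some x \<Rightarrow> Some (x \<otimes>\<^bsub>G\<^esub> g))"

definition graph_translate :: "('a, 'b) monoid_scheme \<Rightarrow> 'a option set set \<Rightarrow> 'a \<Rightarrow> 'a option set set" where
  "graph_translate G F g = (\<lambda>e. rmult G g ` e) ` F"

definition one_rotational :: "('a, 'b) monoid_scheme \<Rightarrow> nat \<Rightarrow> 'a option set set set \<Rightarrow> bool" where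
  "one_rotational G k \<F> \<longleftrightarrow> is_k_factorization (gbar G) k \<F> \<and>
     (\<forall>F\<in>\<F>. \<forall>g\<in>carrier G. graph_translate G F g \<in> \<F>)"

definition is_R :: "('a, 'b) monoid_scheme \<Rightarrow> nat \<Rightarrow> bool" where
  "is_R G k \<longleftrightarrow> (\<exists>\<F>. one_rotational G k \<F>)"

definition involution :: "('a, 'b) monoid_scheme \<Rightarrow> 'a \<Rightarrow> bool" where
  "involution G x \<longleftrightarrow> x \<in> carrier G \<and> group.ord G x = 2"

definition central :: "('a, 'b) monoid_scheme \<Rightarrow> 'a \<Rightarrow> bool" where
  "central G z \<longleftrightarrow> z \<in> carrier G \<and> (\<forall>g\<in>carrier G. z \<otimes>\<^bsub>G\<^esub> g = g \<otimes>\<^bsub>G\<^esub> z)"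

definition conj_class :: "('a, 'b) monoid_scheme \<Rightarrow> 'a \<Rightarrow> 'a set" where
  "conj_class G x = {inv\<^bsub>G\<^esub> g \<otimes>\<^bsub>G\<^esub> x \<otimes>\<^bsub>G\<^esub> g | g. g \<in> carrier G}"

definition conjugate :: "('a, 'b) monoid_scheme \<Rightarrow> 'a \<Rightarrow> 'a \<Rightarrow> bool" where
  "conjugate G x y \<longleftrightarrow> (\<exists>g\<in>carrier G. y = inv\<^bsub>G\<^esub> g \<otimes>\<^bsub>G\<^esub> x \<otimes>\<^bsub>G\<^esub> g)"

definition num_invol_classes :: "('a, 'b) monoid_scheme \<Rightarrow> nat" where
  "num_invol_classes G = card {conj_class G x | x. involution G x}"

end

theory Submission
  imports Defs
begin

text \<open>A 1-rotational \<open>k\<close>-factorization has a subgroup \<open>S\<close> of order \<open>k\<close>, the stabilizer of the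
factor through the edge \<open>{\<infinity>, 1}\<close>, into which every involution \<open>t\<close> can be conjugated: the
factor through \<open>{1, t}\<close> is fixed by \<open>t\<close> and is a translate of the former one. A group of
order \<open>2^n m\<close> with \<open>m\<close> odd has at most \<open>m (2^n - 1)\<close> involutions, because every coset of a
Sylow 2-subgroup \<open>P\<close> contains a non-involution (otherwise \<open>P \<union> Pg\<close> would be a subgroup of
order \<open>2^(n+1)\<close>). With exactly \<open>m (2^n - 1)\<close> classes of involutions in \<open>G\<close>, each class
therefore meets \<open>S\<close> in exactly one involution. A central involution \<open>z\<close> lies in \<open>S\<close>, so if
\<open>x\<close> were conjugate to \<open>xz\<close>, conjugating \<open>x\<close> into \<open>S\<close> as \<open>s\<close> would give the two distinct
conjugate involutions \<open>s\<close> and \<open>sz\<close> of \<open>S\<close>.\<close>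

context group
begin

section \<open>Involutions and conjugacy\<close>

lemma mult_inv_cancel_left [simp]:
  "g \<in> carrier G \<Longrightarrow> x \<in> carrier G \<Longrightarrow> g \<otimes> (inv g \<otimes> x) = x"
  by (simp add: m_assoc[symmetric])

lemma inv_mult_cancel_left [simp]:
  "g \<in> carrier G \<Longrightarrow> x \<in> carrier G \<Longrightarrow> inv g \<otimes> (g \<otimes> x) = x"
  by (simp add: m_assoc[symmetric])

lemma involution_iff:
  "involution G x \<longleftrightarrow> x \<in> carrier G \<and> x \<noteq> \<one> \<and> x \<otimes> x = \<one>"
proof (cases "x \<in> carrier G")
  case True
  have "ord x = 2 \<longleftrightarrow> ord x dvd 2 \<and> ord x \<noteq> 1"
    using two_is_prime_nat prime_nat_iff by auto
  also have "\<dots> \<longleftrightarrow> x \<otimes> x = \<one> \<and> x \<noteq> \<one>"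
    using True ord_eq_1 by (simp add: pow_eq_id[symmetric] numeral_2_eq_2)
  finally show ?thesis using True unfolding involution_def by auto
qed (simp add: involution_def)

lemma conjugate_closed: "x \<in> carrier G \<Longrightarrow> conjugate G x y \<Longrightarrow> y \<in> carrier G"
  unfolding conjugate_def by auto

lemma conjugate_sym:
  assumes "x \<in> carrier G" "conjugate G x y"
  shows "conjugate G y x"
proof -
  obtain g where g: "g \<in> carrier G" and y: "y = inv g \<otimes> x \<otimes> g"
    using assms(2) unfolding conjugate_def by blast
  have "x = inv (inv g) \<otimes> y \<otimes> inv g"
    using assms(1) g by (simp add: y m_assoc)
  thus ?thesis unfolding conjugate_def using g by blast
qed

lemma conjugate_trans:
  assumes "x \<in> carrier G" "conjugate G x y" "conjugate G y w"
  shows "conjugate G x w"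
proof -
  obtain g h where g: "g \<in> carrier G" "y = inv g \<otimes> x \<otimes> g"
    and h: "h \<in> carrier G" "w = inv h \<otimes> y \<otimes> h"
    using assms(2,3) unfolding conjugate_def by blast
  have "w = inv (g \<otimes> h) \<otimes> x \<otimes> (g \<otimes> h)"
    using assms(1) g h by (simp add: m_assoc inv_mult_group)
  thus ?thesis unfolding conjugate_def using g h by blast
qed

lemma conj_class_eq_if_conjugate:
  assumes x: "x \<in> carrier G" and xy: "conjugate G x y"
  shows "conj_class G y = conj_class G x"
proof -
  have classes: "conj_class G v = {w. conjugate G v w}" for v
    unfolding conj_class_def conjugate_def by blast
  have y: "y \<in> carrier G"
    using conjugate_closed[OF x xy] .
  have "{w. conjugate G y w} = {w. conjugate G x w}"
    using conjugate_trans[OF x xy] conjugate_trans[OF y conjugate_sym[OF x xy]] by blast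
  thus ?thesis
    unfolding classes .
qed

lemma involution_conjugate:
  assumes "involution G x" "conjugate G x y"
  shows "involution G y"
proof -
  obtain g where g: "g \<in> carrier G" and y: "y = inv g \<otimes> x \<otimes> g"
    using assms(2) unfolding conjugate_def by blast
  have x: "x \<in> carrier G" "x \<noteq> \<one>" "x \<otimes> x = \<one>"
    using assms(1) involution_iff by auto
  have "y \<otimes> y = inv g \<otimes> (x \<otimes> x) \<otimes> g"
    using x(1) g by (simp add: y m_assoc)
  moreover have "x = g \<otimes> y \<otimes> inv g"
    using x(1) g by (simp add: y m_assoc)
  hence "y \<noteq> \<one>"
    using x g by auto
  ultimately show ?thesis
    using x g involution_iff by (simp add: y)
qed

lemma conjugate_central:
  assumes "central G z" "conjugate G z y"
  shows "y = z"
proof -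
  obtain g where g: "g \<in> carrier G" and y: "y = inv g \<otimes> z \<otimes> g"
    using assms(2) unfolding conjugate_def by blast
  have "z \<in> carrier G" "z \<otimes> g = g \<otimes> z"
    using assms(1) g unfolding central_def by auto
  thus ?thesis
    using g by (simp add: y m_assoc)
qed

lemma involution_mult_central:
  assumes "central G z" "involution G z" "involution G x" "x \<noteq> z"
  shows "involution G (x \<otimes> z)"
proof -
  have z: "z \<in> carrier G" "z \<otimes> z = \<one>" and x: "x \<in> carrier G" "x \<otimes> x = \<one>"
    using assms(2,3) involution_iff by auto
  have comm: "z \<otimes> x = x \<otimes> z"
    using assms(1) x unfolding central_def by auto
  have "(x \<otimes> z) \<otimes> (x \<otimes> z) = x \<otimes> (z \<otimes> x) \<otimes> z"
    using x z by (simp add: m_assoc)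
  also have "\<dots> = (x \<otimes> x) \<otimes> (z \<otimes> z)"
    unfolding comm using x z by (simp add: m_assoc)
  finally have "(x \<otimes> z) \<otimes> (x \<otimes> z) = \<one>"
    using x z by simp
  moreover have "x \<otimes> z \<noteq> \<one>"
  proof
    assume "x \<otimes> z = \<one>"
    hence "x = inv z"
      using x z by (simp add: inv_equality)
    also have "inv z = z"
      using z by (simp add: inv_equality)
    finally show False
      using assms(4) by contradiction
  qed
  ultimately show ?thesis
    using x z involution_iff by simp
qed

lemma involution_subgroup_iff:
  assumes "subgroup S G"
  shows "involution (G\<lparr>carrier := S\<rparr>) x \<longleftrightarrow> x \<in> S \<and> involution G x"
  using group.involution_iff[OF subgroup.subgroup_is_group[OF assms is_group]]
    involution_iff subgroup.mem_carrier[OF assms] by auto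

section \<open>Involutions in a group of order \<open>2^n m\<close>\<close>

lemma subgroup_Un_rcoset:
  assumes P: "subgroup P G" and g: "g \<in> carrier G" "g \<otimes> g = \<one>"
    and conj: "\<And>p. p \<in> P \<Longrightarrow> g \<otimes> p \<otimes> g \<in> P"
  shows "subgroup (P \<union> (P #> g)) G"
proof -
  interpret P: subgroup P G by (fact P)
  have inv_g: "inv g = g"
    using g by (simp add: inv_equality)
  have gg: "g \<otimes> (g \<otimes> x) = x" if "x \<in> carrier G" for x
    using g that by (simp add: m_assoc[symmetric])
  have members: "P \<union> (P #> g) = {h \<in> carrier G. h \<in> P \<or> h \<otimes> g \<in> P}"
    using P.rcos_module[OF is_group g(1)] r_coset_subset_G[OF P.subset g(1)] inv_g by auto
  show ?thesis
    unfolding members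
  proof (rule subgroupI)
    fix a b
    assume "a \<in> {h \<in> carrier G. h \<in> P \<or> h \<otimes> g \<in> P}"
      and "b \<in> {h \<in> carrier G. h \<in> P \<or> h \<otimes> g \<in> P}"
    hence a: "a \<in> carrier G" "a \<in> P \<or> a \<otimes> g \<in> P"
      and b: "b \<in> carrier G" "b \<in> P \<or> b \<otimes> g \<in> P"
      by simp_all
    have "a \<otimes> b \<in> P \<or> a \<otimes> b \<otimes> g \<in> P"
    proof (cases "a \<in> P")
      case True
      have "a \<otimes> b \<otimes> g = a \<otimes> (b \<otimes> g)"
        using a b g by (simp add: m_assoc)
      thus ?thesis
        using True b(2) by auto
    next
      case False
      hence "a \<otimes> g \<in> P"
        using a(2) by simp
      moreover have "a \<otimes> b \<otimes> g = (a \<otimes> g) \<otimes> (g \<otimes> b \<otimes> g)"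
        using a b g by (simp add: m_assoc gg)
      moreover have "a \<otimes> b = (a \<otimes> g) \<otimes> (g \<otimes> (b \<otimes> g) \<otimes> g)"
        using a b g by (simp add: m_assoc gg)
      ultimately show ?thesis
        using b(2) conj by auto
    qed
    thus "a \<otimes> b \<in> {h \<in> carrier G. h \<in> P \<or> h \<otimes> g \<in> P}"
      using a b by simp
  next
    fix a assume "a \<in> {h \<in> carrier G. h \<in> P \<or> h \<otimes> g \<in> P}"
    hence a: "a \<in> carrier G" "a \<in> P \<or> a \<otimes> g \<in> P"
      by simp_all
    have "inv a \<otimes> g = inv (g \<otimes> (a \<otimes> g) \<otimes> g)"
      using a g by (simp add: m_assoc inv_mult_group inv_g)
    hence "inv a \<in> P \<or> inv a \<otimes> g \<in> P"
      using a(2) conj by auto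
    thus "inv a \<in> {h \<in> carrier G. h \<in> P \<or> h \<otimes> g \<in> P}"
      using a by simp
  qed (use P.one_closed in auto)
qed

lemma subgroup_Un_involutive_rcoset:
  assumes P: "subgroup P G" and g: "g \<in> carrier G"
    and sq: "\<And>c. c \<in> P #> g \<Longrightarrow> c \<otimes> c = \<one>"
  shows "subgroup (P \<union> (P #> g)) G"
proof (rule subgroup_Un_rcoset[OF P g])
  interpret P: subgroup P G by (fact P)
  have sq': "p \<otimes> g \<otimes> (p \<otimes> g) = \<one>" if "p \<in> P" for p
    using sq rcosI[OF that P.subset g] .
  show "g \<otimes> g = \<one>"
    using sq'[OF P.one_closed] g by simp
  fix p assume p: "p \<in> P"
  have "p \<otimes> (g \<otimes> p \<otimes> g) = \<one>"
    using sq'[OF p] p g by (simp add: m_assoc)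
  hence "(g \<otimes> p \<otimes> g) \<otimes> p = \<one>"
    by (rule inv_comm) (use p g in simp_all)
  hence "inv p = g \<otimes> p \<otimes> g"
    by (rule inv_equality) (use p g in simp_all)
  thus "g \<otimes> p \<otimes> g \<in> P"
    using p by (metis P.m_inv_closed)
qed

lemma rcoset_of_sylow_has_non_involution:
  assumes "order G = 2 ^ n * m" "odd m"
    and P: "subgroup P G" "card P = 2 ^ n" and R: "R \<in> rcosets P"
  shows "\<exists>c\<in>R. \<not> involution G c"
proof -
  obtain g where g: "g \<in> carrier G" and Rg: "R = P #> g"
    using R unfolding RCOSETS_def by blast
  show ?thesis
  proof (cases "g \<in> P")
    case True
    hence "\<one> \<in> R"
      using Rg subgroup.rcos_const[OF P(1) is_group] subgroup.one_closed[OF P(1)] by simp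
    thus ?thesis
      using involution_iff by blast
  next
    case False
    show ?thesis
    proof (rule ccontr)
      assume "\<not> ?thesis"
      hence "c \<otimes> c = \<one>" if "c \<in> P #> g" for c
        using that involution_iff Rg by blast
      hence H: "subgroup (P \<union> R) G"
        using subgroup_Un_involutive_rcoset[OF P(1) g] Rg by blast
      have "P \<noteq> R"
        using rcos_self[OF g P(1)] Rg False by blast
      hence "disjnt P R"
        using rcos_disjoint[OF P(1)] subgroup.subgroup_in_rcosets[OF P(1) is_group] R
        by (auto simp: pairwise_def)
      moreover have "finite P" "card R = 2 ^ n"
        using P R card_rcosets_equal[OF R subgroup.subset[OF P(1)]]
        by (auto intro: card_ge_0_finite)
      ultimately have "card (P \<union> R) = 2 ^ n * 2"
        using P(2) by (simp add: card_Un_disjnt card_ge_0_finite)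
      moreover have "card (P \<union> R) dvd 2 ^ n * m"
        using lagrange[OF H] assms(1) by (metis dvd_triv_right)
      ultimately show False
        using assms(2) by simp
    qed
  qed
qed

lemma card_involutions_le:
  assumes fin: "finite (carrier G)" and ord: "order G = 2 ^ n * m" and odd: "odd m"
  shows "card {x. involution G x} \<le> m * (2 ^ n - 1)"
proof -
  obtain P where P: "subgroup P G" "card P = 2 ^ n"
    using sylow_thm[OF two_is_prime_nat is_group ord fin] by blast
  have "card (rcosets P) * 2 ^ n = 2 ^ n * m"
    using lagrange[OF P(1)] P(2) ord by simp
  hence cosets: "card (rcosets P) = m"
    by simp
  have bound: "card {c \<in> R. involution G c} \<le> 2 ^ n - 1" if R: "R \<in> rcosets P" for R
  proof -
    have R_card: "card R = 2 ^ n"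
      using card_rcosets_equal[OF R subgroup.subset[OF P(1)]] P(2) by simp
    hence "finite R"
      by (intro card_ge_0_finite) simp
    moreover have "{c \<in> R. involution G c} \<subset> R"
      using rcoset_of_sylow_has_non_involution[OF ord odd P R] by blast
    ultimately have "card {c \<in> R. involution G c} < card R"
      by (rule psubset_card_mono)
    thus ?thesis
      using R_card by simp
  qed
  have "{x. involution G x} = (\<Union>R\<in>rcosets P. {c \<in> R. involution G c})"
    using rcosets_part_G[OF P(1)] involution_iff by blast
  moreover have "finite (rcosets P)"
    using rcosets_subset_PowG[OF P(1)] fin by (meson finite_Pow_iff finite_subset)
  ultimately have "card {x. involution G x} \<le> (\<Sum>R\<in>rcosets P. card {c \<in> R. involution G c})"
    by (simp add: card_UN_le)
  also have "\<dots> \<le> card (rcosets P) * (2 ^ n - 1)"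
    using sum_bounded_above[of "rcosets P" _ "2 ^ n - 1 :: nat"] bound by simp
  finally show ?thesis
    using cosets by simp
qed

lemma conjugate_involutions_in_subgroup_eq:
  assumes fin: "finite (carrier G)" and S: "subgroup S G"
    and meets: "\<And>t. involution G t \<Longrightarrow> \<exists>s\<in>S. conjugate G t s"
    and few: "card {s \<in> S. involution G s} \<le> num_invol_classes G"
    and s1: "s1 \<in> S" "involution G s1" and s2: "s2 \<in> S" and conj: "conjugate G s1 s2"
  shows "s1 = s2"
proof -
  define I where "I = {s \<in> S. involution G s}"
  have classes: "conj_class G ` I = {conj_class G x | x. involution G x}"
  proof (intro equalityI subsetI)
    fix C assume "C \<in> {conj_class G x | x. involution G x}"
    then obtain y where y: "involution G y" and C: "C = conj_class G y"
      by blast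
    obtain s where s: "s \<in> S" "conjugate G y s"
      using meets[OF y] by blast
    have "conj_class G s = C"
      using conj_class_eq_if_conjugate[OF _ s(2)] y C involution_iff by simp
    moreover have "s \<in> I"
      using s involution_conjugate[OF y] unfolding I_def by simp
    ultimately show "C \<in> conj_class G ` I"
      by blast
  qed (auto simp: I_def)
  have "finite I"
    using fin subgroup.subset[OF S] unfolding I_def by (auto intro: finite_subset)
  moreover have "card I \<le> card (conj_class G ` I)"
    using few unfolding num_invol_classes_def classes[symmetric] I_def[symmetric] .
  hence "card (conj_class G ` I) = card I"
    using card_image_le[OF \<open>finite I\<close>] le_antisym by blast
  ultimately have "inj_on (conj_class G) I"
    by (rule eq_card_imp_inj_on)
  moreover have "s1 \<in> I" "s2 \<in> I"
    using s1 s2 involution_conjugate[OF s1(2) conj] unfolding I_def by simp_all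
  moreover have "conj_class G s2 = conj_class G s1"
    using conj_class_eq_if_conjugate[OF _ conj] s1 involution_iff by simp
  ultimately show ?thesis
    by (auto dest: inj_onD)
qed

lemma central_involution_mult_not_conjugate:
  assumes S: "subgroup S G"
    and meets: "\<And>t. involution G t \<Longrightarrow> \<exists>s\<in>S. conjugate G t s"
    and unique: "\<And>s1 s2. s1 \<in> S \<Longrightarrow> involution G s1 \<Longrightarrow> s2 \<in> S \<Longrightarrow> conjugate G s1 s2 \<Longrightarrow> s1 = s2"
    and z: "central G z" "involution G z" and x: "involution G x"
  shows "\<not> conjugate G x (x \<otimes> z)"
proof
  assume x_xz: "conjugate G x (x \<otimes> z)"
  have zc: "z \<in> carrier G" "z \<noteq> \<one>" and xc: "x \<in> carrier G"
    using z x involution_iff by auto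
  have "z \<in> S"
    using meets[OF z(2)] conjugate_central[OF z(1)] by blast
  obtain g where g: "g \<in> carrier G" and gx: "inv g \<otimes> x \<otimes> g \<in> S"
    using meets[OF x] unfolding conjugate_def by blast
  define s where "s = inv g \<otimes> x \<otimes> g"
  have x_s: "conjugate G x s"
    unfolding conjugate_def s_def using g by blast
  have "s \<otimes> z = inv g \<otimes> (x \<otimes> z) \<otimes> g"
    using z(1) g xc zc unfolding s_def central_def by (simp add: m_assoc)
  hence "conjugate G (x \<otimes> z) (s \<otimes> z)"
    unfolding conjugate_def using g by blast
  hence "conjugate G s (s \<otimes> z)"
    using x_s x_xz xc g conjugate_sym conjugate_trans by (meson conjugate_closed)
  moreover have "s \<otimes> z \<in> S"
    using gx \<open>z \<in> S\<close> S unfolding s_def by (simp add: subgroup.m_closed)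
  ultimately have "s = s \<otimes> z"
    using unique gx involution_conjugate[OF x x_s] unfolding s_def by blast
  hence "s \<otimes> \<one> = s \<otimes> z"
    using g xc unfolding s_def by simp
  thus False
    using g xc zc unfolding s_def by simp
qed

section \<open>Stabilizers of a 1-rotational factorization\<close>

lemma rmult_None [simp]: "rmult G g None = None"
  unfolding rmult_def by simp

lemma rmult_Some [simp]: "rmult G g (Some x) = Some (x \<otimes> g)"
  unfolding rmult_def by simp

lemma rmult_rmult:
  assumes "v \<in> gbar G" "a \<in> carrier G" "b \<in> carrier G"
  shows "rmult G b (rmult G a v) = rmult G (a \<otimes> b) v"
  using assms unfolding gbar_def rmult_def by (auto simp: m_assoc)

lemma rmult_one: "v \<in> gbar G \<Longrightarrow> rmult G \<one> v = v"
  unfolding gbar_def rmult_def by auto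

lemma graph_translate_mult:
  assumes F: "F \<subseteq> Pow (gbar G)" and a: "a \<in> carrier G" and b: "b \<in> carrier G"
  shows "graph_translate G (graph_translate G F a) b = graph_translate G F (a \<otimes> b)"
proof -
  have "rmult G b ` rmult G a ` e = rmult G (a \<otimes> b) ` e" if "e \<in> F" for e
  proof -
    have "e \<subseteq> gbar G"
      using that F by auto
    thus ?thesis
      unfolding image_image using rmult_rmult[OF _ a b] by (intro image_cong) auto
  qed
  thus ?thesis
    unfolding graph_translate_def image_image by (auto intro: image_cong)
qed

lemma graph_translate_one:
  assumes "F \<subseteq> Pow (gbar G)"
  shows "graph_translate G F \<one> = F"
proof -
  have "rmult G \<one> ` e = e" if "e \<in> F" for e
  proof -
    have "e \<subseteq> gbar G"
      using that assms by auto
    thus ?thesis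
      using rmult_one by (simp add: subset_iff cong: image_cong)
  qed
  thus ?thesis
    unfolding graph_translate_def by simp
qed

end

locale rotational_factorization = group G for G :: "('a, 'b) monoid_scheme" (structure) +
  fixes k :: nat and Fs :: "'a option set set set"
  assumes one_rotational: "one_rotational G k Fs" and degree_pos: "0 < k"
begin

definition stab :: "'a option set set \<Rightarrow> 'a set"
  where "stab F = {g \<in> carrier G. graph_translate G F g = F}"

definition infinity_nbrs :: "'a option set set \<Rightarrow> 'a set"
  where "infinity_nbrs F = {b \<in> carrier G. {None, Some b} \<in> F}"

lemma factorization: "is_k_factorization (gbar G) k Fs"
  using one_rotational unfolding one_rotational_def by simp

lemma factor_edges: "F \<in> Fs \<Longrightarrow> F \<subseteq> complete_edges (gbar G)"
  using factorization unfolding is_k_factorization_def is_k_factor_def by simp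

lemma factor_Pow: "F \<in> Fs \<Longrightarrow> F \<subseteq> Pow (gbar G)"
  using factor_edges unfolding complete_edges_def by blast

lemma factor_degree: "F \<in> Fs \<Longrightarrow> v \<in> gbar G \<Longrightarrow> degree_in F v = k"
  using factorization unfolding is_k_factorization_def is_k_factor_def by simp

lemma factor_eq_if_common_edge: "F1 \<in> Fs \<Longrightarrow> F2 \<in> Fs \<Longrightarrow> e \<in> F1 \<Longrightarrow> e \<in> F2 \<Longrightarrow> F1 = F2"
  using factorization unfolding is_k_factorization_def by blast

lemma edge_in_factor: "e \<in> complete_edges (gbar G) \<Longrightarrow> \<exists>F\<in>Fs. e \<in> F"
  using factorization unfolding is_k_factorization_def by blast

lemma translate_factor: "F \<in> Fs \<Longrightarrow> g \<in> carrier G \<Longrightarrow> graph_translate G F g \<in> Fs"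
  using one_rotational unfolding one_rotational_def by simp

lemma translate_edge: "e \<in> F \<Longrightarrow> rmult G g ` e \<in> graph_translate G F g"
  unfolding graph_translate_def by blast

lemma stab_if_edge_translate:
  assumes F: "F \<in> Fs" and g: "g \<in> carrier G" and e: "e \<in> F" "rmult G g ` e \<in> F"
  shows "g \<in> stab F"
  using factor_eq_if_common_edge[OF translate_factor[OF F g] F translate_edge[OF e(1)] e(2)] g
  unfolding stab_def by simp

lemma stab_subgroup:
  assumes F: "F \<in> Fs"
  shows "subgroup (stab F) G"
proof (rule subgroupI)
  show "stab F \<subseteq> carrier G" "stab F \<noteq> {}"
    using graph_translate_one[OF factor_Pow[OF F]] unfolding stab_def by auto
next
  fix a b assume "a \<in> stab F" "b \<in> stab F"
  moreover from this have "graph_translate G F (a \<otimes> b) = F"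
    using graph_translate_mult[OF factor_Pow[OF F], of a b] unfolding stab_def by simp
  ultimately show "a \<otimes> b \<in> stab F"
    unfolding stab_def by simp
next
  fix a assume "a \<in> stab F"
  hence a: "a \<in> carrier G" "graph_translate G F a = F"
    unfolding stab_def by auto
  have "graph_translate G F (inv a) = graph_translate G (graph_translate G F a) (inv a)"
    using a(2) by simp
  also have "\<dots> = F"
    using graph_translate_mult[OF factor_Pow[OF F] a(1)] graph_translate_one[OF factor_Pow[OF F]] a(1)
    by simp
  finally show "inv a \<in> stab F"
    using a(1) unfolding stab_def by simp
qed

lemma card_infinity_nbrs:
  assumes F: "F \<in> Fs"
  shows "card (infinity_nbrs F) = k"
proof -
  have "{e \<in> F. None \<in> e} = (\<lambda>b. {None, Some b}) ` infinity_nbrs F"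
  proof (intro equalityI subsetI)
    fix e assume "e \<in> {e \<in> F. None \<in> e}"
    hence e: "e \<in> F" "None \<in> e"
      by auto
    hence "e \<subseteq> gbar G" "card e = 2"
      using factor_edges[OF F] unfolding complete_edges_def by auto
    moreover obtain w where "e = {None, w}" "w \<noteq> None"
    proof -
      obtain x y where xy: "e = {x, y}" "x \<noteq> y"
        using \<open>card e = 2\<close> unfolding card_2_iff by blast
      show thesis
      proof (cases "x = None")
        case True
        show thesis
          by (rule that[of y]) (use xy True in auto)
      next
        case False
        hence "e = {None, x}"
          using xy e(2) by auto
        thus thesis
          using that False by blast
      qed
    qed
    ultimately obtain b where "b \<in> carrier G" "e = {None, Some b}"
      unfolding gbar_def by auto
    thus "e \<in> (\<lambda>b. {None, Some b}) ` infinity_nbrs F"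
      using e unfolding infinity_nbrs_def by blast
  qed (auto simp: infinity_nbrs_def)
  moreover have "inj_on (\<lambda>b. {None, Some b}) (infinity_nbrs F)"
    by (auto simp: inj_on_def doubleton_eq_iff)
  ultimately have "card (infinity_nbrs F) = degree_in F None"
    unfolding degree_in_def by (simp add: card_image)
  thus ?thesis
    using factor_degree[OF F] unfolding gbar_def by simp
qed

lemma infinity_nbrs_eq_lcoset:
  assumes F: "F \<in> Fs" and a: "a \<in> infinity_nbrs F"
  shows "infinity_nbrs F = (\<lambda>s. a \<otimes> s) ` stab F"
proof (intro equalityI subsetI)
  have ac: "a \<in> carrier G" and ea: "{None, Some a} \<in> F"
    using a unfolding infinity_nbrs_def by auto
  fix b assume b: "b \<in> infinity_nbrs F"
  hence bc: "b \<in> carrier G" and eb: "{None, Some b} \<in> F"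
    unfolding infinity_nbrs_def by auto
  have "rmult G (inv a \<otimes> b) ` {None, Some a} = {None, Some b}"
    using ac bc by (simp add: m_assoc[symmetric])
  hence "inv a \<otimes> b \<in> stab F"
    using stab_if_edge_translate[OF F _ ea] eb ac bc by simp
  moreover have "b = a \<otimes> (inv a \<otimes> b)"
    using ac bc by simp
  ultimately show "b \<in> (\<lambda>s. a \<otimes> s) ` stab F"
    by blast
next
  have ac: "a \<in> carrier G" and ea: "{None, Some a} \<in> F"
    using a unfolding infinity_nbrs_def by auto
  fix b assume "b \<in> (\<lambda>s. a \<otimes> s) ` stab F"
  then obtain s where s: "s \<in> carrier G" "graph_translate G F s = F" and b: "b = a \<otimes> s"
    unfolding stab_def by blast
  have "{None, Some b} \<in> F"
    using translate_edge[OF ea, of s] s b by simp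
  thus "b \<in> infinity_nbrs F"
    using ac s b unfolding infinity_nbrs_def by simp
qed

lemma card_stab:
  assumes F: "F \<in> Fs" and a: "a \<in> infinity_nbrs F"
  shows "card (stab F) = k"
proof -
  have "a \<in> carrier G"
    using a unfolding infinity_nbrs_def by simp
  hence "inj_on (\<lambda>s. a \<otimes> s) (stab F)"
    by (rule inj_on_subset[OF inj_on_cmult]) (auto simp: stab_def)
  hence "card ((\<lambda>s. a \<otimes> s) ` stab F) = card (stab F)"
    by (rule card_image)
  thus ?thesis
    using card_infinity_nbrs[OF F] infinity_nbrs_eq_lcoset[OF F a] by simp
qed

lemma stab_translate_conj:
  assumes F: "F \<in> Fs" and b: "b \<in> carrier G" and t: "t \<in> stab (graph_translate G F b)"
  shows "b \<otimes> t \<otimes> inv b \<in> stab F"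
proof -
  have tc: "t \<in> carrier G" and Tt: "graph_translate G (graph_translate G F b) t = graph_translate G F b"
    using t unfolding stab_def by auto
  note mult = graph_translate_mult[OF factor_Pow[OF F]]
  have "graph_translate G F (b \<otimes> t \<otimes> inv b) = graph_translate G (graph_translate G F b) (inv b)"
    using mult[of "b \<otimes> t" "inv b"] mult[OF b tc] Tt b tc by simp
  also have "\<dots> = F"
    using mult[OF b, of "inv b"] graph_translate_one[OF factor_Pow[OF F]] b by simp
  finally show ?thesis
    using b tc unfolding stab_def by simp
qed

lemma factor_eq_translate:
  assumes F0: "F0 \<in> Fs" "{None, Some \<one>} \<in> F0" and F: "F \<in> Fs" and b: "b \<in> infinity_nbrs F"
  shows "F = graph_translate G F0 b"
proof -
  have "b \<in> carrier G" "{None, Some b} \<in> F"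
    using b unfolding infinity_nbrs_def by auto
  moreover from this have "{None, Some b} \<in> graph_translate G F0 b"
    using translate_edge[OF F0(2), of b] by simp
  ultimately show ?thesis
    using factor_eq_if_common_edge[OF F translate_factor[OF F0(1)]] by blast
qed

lemma involution_in_stab:
  assumes t: "involution G t" and F: "F \<in> Fs" and e: "{Some \<one>, Some t} \<in> F"
  shows "t \<in> stab F"
proof -
  have "t \<in> carrier G" "t \<otimes> t = \<one>"
    using t involution_iff by auto
  hence "rmult G t ` {Some \<one>, Some t} = {Some \<one>, Some t}"
    by auto
  thus ?thesis
    using stab_if_edge_translate[OF F \<open>t \<in> carrier G\<close> e] e by simp
qed

lemma ex_subgroup_meeting_involution_classes:
  "\<exists>S. subgroup S G \<and> card S = k \<and> (\<forall>t. involution G t \<longrightarrow> (\<exists>s\<in>S. conjugate G t s))"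
proof -
  have "{None, Some \<one>} \<in> complete_edges (gbar G)"
    unfolding complete_edges_def gbar_def by auto
  then obtain F0 where F0: "F0 \<in> Fs" "{None, Some \<one>} \<in> F0"
    using edge_in_factor by blast
  have "\<exists>s\<in>stab F0. conjugate G t s" if t: "involution G t" for t
  proof -
    have tc: "t \<in> carrier G" "t \<noteq> \<one>"
      using t involution_iff by auto
    hence "{Some \<one>, Some t} \<in> complete_edges (gbar G)"
      unfolding complete_edges_def gbar_def by auto
    then obtain F where F: "F \<in> Fs" "{Some \<one>, Some t} \<in> F"
      using edge_in_factor by blast
    obtain b where b: "b \<in> infinity_nbrs F"
      using card_infinity_nbrs[OF F(1)] degree_pos by fastforce
    hence bc: "b \<in> carrier G"
      unfolding infinity_nbrs_def by simp
    have "t \<in> stab (graph_translate G F0 b)"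
      using involution_in_stab[OF t F] factor_eq_translate[OF F0 F(1) b] by simp
    hence "b \<otimes> t \<otimes> inv b \<in> stab F0"
      by (rule stab_translate_conj[OF F0(1) bc])
    moreover have "conjugate G t (b \<otimes> t \<otimes> inv b)"
      unfolding conjugate_def using bc tc by (intro bexI[of _ "inv b"]) simp_all
    ultimately show ?thesis
      by blast
  qed
  moreover have "\<one> \<in> infinity_nbrs F0"
    using F0 unfolding infinity_nbrs_def by simp
  ultimately show ?thesis
    using stab_subgroup[OF F0(1)] card_stab[OF F0(1)] by blast
qed

end

theorem theorem2p6:
  fixes G :: "('a, 'b) monoid_scheme" and n m :: nat
  assumes "group G" and "finite (carrier G)"
    and "n \<ge> 1" and "odd m"
    and "is_R G (2 ^ n * m)"
    and "num_invol_classes G = m * (2 ^ n - 1)"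
  shows "\<forall>z x. central G z \<and> involution G z \<and> involution G x \<and> x \<noteq> z \<longrightarrow>
           involution G (x \<otimes>\<^bsub>G\<^esub> z) \<and> \<not> conjugate G x (x \<otimes>\<^bsub>G\<^esub> z)"
proof (intro allI impI)
  fix z x assume zx: "central G z \<and> involution G z \<and> involution G x \<and> x \<noteq> z"
  interpret group G by fact
  obtain Fs where "one_rotational G (2 ^ n * m) Fs"
    using assms(5) unfolding is_R_def by blast
  moreover have k: "0 < 2 ^ n * m"
    using assms(4) by (simp add: odd_pos)
  ultimately interpret rotational_factorization G "2 ^ n * m" Fs
    by unfold_locales
  obtain S where S: "subgroup S G" "card S = 2 ^ n * m"
    and meets: "\<And>t. involution G t \<Longrightarrow> \<exists>s\<in>S. conjugate G t s"
    using ex_subgroup_meeting_involution_classes by blast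
  have "card {s. involution (G\<lparr>carrier := S\<rparr>) s} \<le> m * (2 ^ n - 1)"
    using group.card_involutions_le[OF subgroup.subgroup_is_group[OF S(1) is_group], of n m]
      S k assms(4) by (simp add: order_def card_ge_0_finite)
  hence "card {s \<in> S. involution G s} \<le> num_invol_classes G"
    using assms(6) involution_subgroup_iff[OF S(1)] by simp
  hence "s1 = s2" if "s1 \<in> S" "involution G s1" "s2 \<in> S" "conjugate G s1 s2" for s1 s2
    using conjugate_involutions_in_subgroup_eq[OF assms(2) S(1) meets] that by blast
  thus "involution G (x \<otimes>\<^bsub>G\<^esub> z) \<and> \<not> conjugate G x (x \<otimes>\<^bsub>G\<^esub> z)"
    using involution_mult_central central_involution_mult_not_conjugate[OF S(1) meets] zx
    by blast
qed

end
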